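(* Let $C$ be a real $k\times l$ matrix with all entries nonnegative and no column consisting entirely of zeros, and let $A$ be the real symmetric $(k+1+l)\times(k+1+l)$ block matrix $$A=\begin{pmatrix}\mathbf 0_{k\times k}&\mathbf 0_{k\times 1}&C\\ \mathbf 0_{1\times k}&0&\mathbf 0_{1\times l}\\ C^{T}&\mathbf 0_{l\times 1}&\mathbf 0_{l\times l}\end{pmatrix}.$$ If $A$ has symmetric tropical rank two, then $A$ has symmetric Kapranov rank two.
   Context: Let $\tilde K$ be the field of Hahn series $\sum_{\alpha\in A}c_\alpha t^\alpha$ ($A\subset\mathbb R$ well-ordered, $c_\alpha\in\mathbb C$); for nonzero $a\in\tilde K$, $\deg(a)$ is the smallest exponent with nonzero coefficient. A symmetric lift of a real symmetric matrix $A$ is a symmetric matrix $\tilde A$ over $\tilde K$ with all entries nonzero and $\deg(\tilde a_{i,j})=A_{i,j}$; the symmetric Kapranov rank of $A$ is the minimum rank of a symmetric lift. For an $r\times r$ submatrix of $A$ with row index set $I$ and column index set $J$, each bijection $\rho:I\to J$ gives a monomial $\prod_{i\in I}X_{i,\rho(i)}$ in commuting variables subject to $X_{i,j}=X_{j,i}$, with value $\sum_{i\in I}A_{i,\rho(i)}$; the submatrix is symmetrically tropically singular if the minimum value is attained by at least two distinct monomials. The symmetric tropical rank of $A$ is the largest $r$ such that $A$ has an $r\times r$ submatrix that is not symmetrically tropically singular. *)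

theory Defs
  imports Complex_Main "HOL-Library.Multiset"
begin

definition is_hahn :: "(real \<Rightarrow> complex) \<Rightarrow> bool" where
  "is_hahn f \<longleftrightarrow> (\<forall>B \<subseteq> {a. f a \<noteq> 0}. B \<noteq> {} \<longrightarrow> (\<exists>m\<in>B. \<forall>b\<in>B. m \<le> b))"

definition hzero :: "real \<Rightarrow> complex" where
  "hzero = (\<lambda>_. 0)"

definition hdeg :: "(real \<Rightarrow> complex) \<Rightarrow> real" where
  "hdeg f = (THE m. f m \<noteq> 0 \<and> (\<forall>b. f b \<noteq> 0 \<longrightarrow> m \<le> b))"

text \<open>Product of Hahn series (Cauchy product; the index set is finite for Hahn series).
  Addition is pointwise.\<close>
definition hmul :: "(real \<Rightarrow> complex) \<Rightarrow> (real \<Rightarrow> complex) \<Rightarrow> (real \<Rightarrow> complex)" where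
  "hmul f g = (\<lambda>c. \<Sum>p \<in> {(a, b). a + b = c \<and> f a \<noteq> 0 \<and> g b \<noteq> 0}. f (fst p) * g (snd p))"

text \<open>An n x n matrix M over the Hahn series field has rank at most r iff it is
  a sum of r rank-one matrices, i.e. M = U V with U of size n x r, V of size r x n.\<close>
definition hrank_le :: "(nat \<Rightarrow> nat \<Rightarrow> (real \<Rightarrow> complex)) \<Rightarrow> nat \<Rightarrow> nat \<Rightarrow> bool" where
  "hrank_le M n r \<longleftrightarrow> (\<exists>u v. (\<forall>i s. is_hahn (u i s) \<and> is_hahn (v s i)) \<and>
      (\<forall>i<n. \<forall>j<n. M i j = (\<lambda>c. \<Sum>s<r. hmul (u i s) (v s j) c)))"

definition sym_lift :: "(nat \<Rightarrow> nat \<Rightarrow> real) \<Rightarrow> nat \<Rightarrow> (nat \<Rightarrow> nat \<Rightarrow> (real \<Rightarrow> complex)) \<Rightarrow> bool" where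
  "sym_lift A n M \<longleftrightarrow> (\<forall>i<n. \<forall>j<n. is_hahn (M i j) \<and> M i j \<noteq> hzero \<and>
      hdeg (M i j) = A i j \<and> M i j = M j i)"

definition sym_kapranov_rank :: "(nat \<Rightarrow> nat \<Rightarrow> real) \<Rightarrow> nat \<Rightarrow> nat" where
  "sym_kapranov_rank A n = (LEAST r. \<exists>M. sym_lift A n M \<and> hrank_le M n r)"

text \<open>Monomial of a bijection rho : I -> J, in commuting variables with X_ij = X_ji:
  a multiset of unordered index pairs (normalised as (min, max)).\<close>
definition sym_monomial :: "nat set \<Rightarrow> (nat \<Rightarrow> nat) \<Rightarrow> (nat \<times> nat) multiset" where
  "sym_monomial I \<rho> = image_mset (\<lambda>i. (min i (\<rho> i), max i (\<rho> i))) (mset_set I)"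

definition trop_val :: "(nat \<Rightarrow> nat \<Rightarrow> real) \<Rightarrow> nat set \<Rightarrow> (nat \<Rightarrow> nat) \<Rightarrow> real" where
  "trop_val A I \<rho> = (\<Sum>i\<in>I. A i (\<rho> i))"

definition sym_trop_singular :: "(nat \<Rightarrow> nat \<Rightarrow> real) \<Rightarrow> nat set \<Rightarrow> nat set \<Rightarrow> bool" where
  "sym_trop_singular A I J \<longleftrightarrow> (\<exists>\<rho>1 \<rho>2. bij_betw \<rho>1 I J \<and> bij_betw \<rho>2 I J \<and>
      sym_monomial I \<rho>1 \<noteq> sym_monomial I \<rho>2 \<and>
      (\<forall>\<rho>. bij_betw \<rho> I J \<longrightarrow> trop_val A I \<rho>1 \<le> trop_val A I \<rho> \<and> trop_val A I \<rho>2 \<le> trop_val A I \<rho>))"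

definition sym_trop_rank :: "(nat \<Rightarrow> nat \<Rightarrow> real) \<Rightarrow> nat \<Rightarrow> nat" where
  "sym_trop_rank A n = Max {r. \<exists>I J. I \<subseteq> {..<n} \<and> J \<subseteq> {..<n} \<and> card I = r \<and> card J = r \<and>
      \<not> sym_trop_singular A I J}"

text \<open>Indices 0..k-1, k, k+1..k+l; C is k x l (indices i<k, j<l).\<close>
definition block_matrix :: "nat \<Rightarrow> (nat \<Rightarrow> nat \<Rightarrow> real) \<Rightarrow> nat \<Rightarrow> nat \<Rightarrow> real" where
  "block_matrix k C i j =
     (if i < k \<and> k + 1 \<le> j then C i (j - (k + 1))
      else if k + 1 \<le> i \<and> j < k then C j (i - (k + 1))
      else 0)"

end

theory Submission
  imports Defs
begin

(* A lift of rank at most one has degrees of the form a x + b y, which makes every 2 x 2 minor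
   symmetrically tropically singular; so a nonsingular 2 x 2 minor forces Kapranov rank at least two.

   Conversely, a 2 x 2 submatrix of C whose minimum is attained only once would, together with the
   zero row and column k, give a nonsingular 3 x 3 minor.  Without such submatrices, in the graph
   joining indices whose entry exceeds v every path of three edges between distinct ends can be
   shortcut by a single edge.  Since only entries between the sides {..k} and {k+1..} are positive,
   indices x, y on opposite sides are then never connected above A x y.  Labelling, for each entry
   value c, the components of the graph above c yields series f x with f x c = f y c for c < A x y
   but not for c = A x y.  Hence f x - f y has degree A x y across the sides, f x + f y has
   degree 0 within a side, and the matrix s x * f x + s y * f y with signs s = +-1 according to
   the side is a symmetric lift of rank two. *)

lemma is_hahn_if_finite_support:
  assumes "finite {a. f a \<noteq> 0}"
  shows "is_hahn f"
  unfolding is_hahn_def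
proof (intro allI impI)
  fix B assume B: "B \<subseteq> {a. f a \<noteq> 0}" "B \<noteq> {}"
  then have "finite B" using assms finite_subset by blast
  then show "\<exists>m\<in>B. \<forall>b\<in>B. m \<le> b" using B(2) by (metis Min_in Min_le)
qed

lemma hdeg_eqI:
  assumes "f d \<noteq> 0" and "\<And>c. c < d \<Longrightarrow> f c = 0"
  shows "hdeg f = d"
  unfolding hdeg_def
proof (rule the_equality)
  show "f d \<noteq> 0 \<and> (\<forall>c. f c \<noteq> 0 \<longrightarrow> d \<le> c)" using assms by (meson not_le)
next
  fix d' assume "f d' \<noteq> 0 \<and> (\<forall>c. f c \<noteq> 0 \<longrightarrow> d' \<le> c)"
  then show "d' = d" using assms by (meson antisym not_le)
qed

lemma hdeg_least:
  assumes "is_hahn f" and "f \<noteq> hzero"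
  shows "f (hdeg f) \<noteq> 0" and "f c \<noteq> 0 \<Longrightarrow> hdeg f \<le> c"
proof -
  have "{a. f a \<noteq> 0} \<noteq> {}" using assms(2) unfolding hzero_def by auto
  then have "\<exists>d\<in>{a. f a \<noteq> 0}. \<forall>c\<in>{a. f a \<noteq> 0}. d \<le> c"
    using assms(1) unfolding is_hahn_def by blast
  then obtain d where d: "f d \<noteq> 0" "\<And>c. f c \<noteq> 0 \<Longrightarrow> d \<le> c" by blast
  have "hdeg f = d" using d by (intro hdeg_eqI) (auto simp: not_less[symmetric])
  then show "f (hdeg f) \<noteq> 0" and "f c \<noteq> 0 \<Longrightarrow> hdeg f \<le> c" using d by auto
qed

lemma hmul_hzero_left [simp]: "hmul hzero g = hzero"
  unfolding hmul_def hzero_def by simp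

lemma hmul_hzero_right [simp]: "hmul f hzero = hzero"
  unfolding hmul_def hzero_def by simp

lemma hdeg_hmul:
  assumes "is_hahn f" "is_hahn g" "f \<noteq> hzero" "g \<noteq> hzero"
  shows "hmul f g \<noteq> hzero" and "hdeg (hmul f g) = hdeg f + hdeg g"
proof -
  note f = hdeg_least[OF assms(1,3)] and g = hdeg_least[OF assms(2,4)]
  have leading: "{(a, b). a + b = hdeg f + hdeg g \<and> f a \<noteq> 0 \<and> g b \<noteq> 0} = {(hdeg f, hdeg g)}"
  proof safe
    fix a b assume "a + b = hdeg f + hdeg g" "f a \<noteq> 0" "g b \<noteq> 0"
    with f(2)[of a] g(2)[of b] show "a = hdeg f" "b = hdeg g" by auto
  qed (use f g in auto)
  have "hmul f g (hdeg f + hdeg g) \<noteq> 0"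
    unfolding hmul_def leading using f(1) g(1) by simp
  moreover have "hmul f g c = 0" if "c < hdeg f + hdeg g" for c
  proof -
    have none: "{(a, b). a + b = c \<and> f a \<noteq> 0 \<and> g b \<noteq> 0} = {}"
      using f(2) g(2) that by fastforce
    show ?thesis unfolding hmul_def none by simp
  qed
  ultimately show "hmul f g \<noteq> hzero" and "hdeg (hmul f g) = hdeg f + hdeg g"
    by (auto simp: hzero_def intro: hdeg_eqI)
qed

definition hone :: "real \<Rightarrow> complex" where
  "hone = (\<lambda>c. if c = 0 then 1 else 0)"

lemma is_hahn_hone: "is_hahn hone"
  by (rule is_hahn_if_finite_support) (simp add: hone_def)

lemma hmul_hone_left [simp]: "hmul hone g = g"
proof
  fix c
  have "{(a, b). a + b = c \<and> hone a \<noteq> 0 \<and> g b \<noteq> 0} = (if g c = 0 then {} else {(0, c)})"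
    unfolding hone_def by (auto split: if_splits)
  then show "hmul hone g c = g c" unfolding hmul_def by (simp add: hone_def)
qed

lemma hmul_hone_right [simp]: "hmul f hone = f"
proof
  fix c
  have "{(a, b). a + b = c \<and> f a \<noteq> 0 \<and> hone b \<noteq> 0} = (if f c = 0 then {} else {(c, 0)})"
    unfolding hone_def by (auto split: if_splits)
  then show "hmul f hone c = f c" unfolding hmul_def by (simp add: hone_def)
qed

lemma hrank_le_2_sum:
  assumes "\<And>x. is_hahn (g x)"
  shows "hrank_le (\<lambda>x y c. g x c + g y c) n 2"
proof -
  define u where "u x s = (if s = 0 then hone else g x)" for x and s :: nat
  define v where "v s y = (if s = 0 then g y else hone)" for y and s :: nat
  have "is_hahn (u x s) \<and> is_hahn (v s x)" for x s
    unfolding u_def v_def using assms is_hahn_hone by simp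
  moreover have "(\<lambda>c. g x c + g y c) = (\<lambda>c. \<Sum>s<2. hmul (u x s) (v s y) c)" for x y
    unfolding u_def v_def by (simp add: numeral_2_eq_2 add.commute)
  ultimately show ?thesis unfolding hrank_le_def by blast
qed

section \<open>Lifts of rank at most one\<close>

lemma sym_lift_hrank_le_1_additive:
  assumes lift: "sym_lift A n M" and rank: "hrank_le M n r" and "r \<le> 1"
  obtains a b where "\<And>x y. x < n \<Longrightarrow> y < n \<Longrightarrow> A x y = a x + b y"
proof -
  from rank obtain u v where hahn: "\<forall>x s. is_hahn (u x s) \<and> is_hahn (v s x)"
    and M: "\<forall>x<n. \<forall>y<n. M x y = (\<lambda>c. \<Sum>s<r. hmul (u x s) (v s y) c)"
    unfolding hrank_le_def by auto
  have "A x y = hdeg (u x 0) + hdeg (v 0 y)" if xy: "x < n" "y < n" for x y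
  proof -
    have Mxy: "M x y \<noteq> hzero" "hdeg (M x y) = A x y"
      using lift xy unfolding sym_lift_def by blast+
    have "r \<noteq> 0"
    proof
      assume "r = 0"
      then have "M x y = hzero" using M[rule_format, OF xy] by (simp add: hzero_def)
      then show False using Mxy(1) by contradiction
    qed
    then have "r = 1" using \<open>r \<le> 1\<close> by simp
    then have prod: "M x y = hmul (u x 0) (v 0 y)" using M[rule_format, OF xy] by simp
    then have "u x 0 \<noteq> hzero" "v 0 y \<noteq> hzero" using Mxy(1) by auto
    then have "hdeg (M x y) = hdeg (u x 0) + hdeg (v 0 y)" using prod hdeg_hmul(2) hahn by simp
    then show ?thesis using Mxy(2) by simp
  qed
  then show ?thesis by (rule that)
qed

lemma sym_monomial_swap_neq:
  assumes "i1 \<noteq> i2" "j1 \<noteq> j2"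
  shows "sym_monomial {i1, i2} (\<lambda>x. if x = i1 then j1 else j2)
    \<noteq> sym_monomial {i1, i2} (\<lambda>x. if x = i1 then j2 else j1)"
proof
  let ?e = "\<lambda>i j :: nat. (min i j, max i j)"
  assume "sym_monomial {i1, i2} (\<lambda>x. if x = i1 then j1 else j2)
    = sym_monomial {i1, i2} (\<lambda>x. if x = i1 then j2 else j1)"
  then have "{#?e i1 j1, ?e i2 j2#} = {#?e i1 j2, ?e i2 j1#}"
    unfolding sym_monomial_def using assms by simp
  then have "?e i1 j1 \<in># {#?e i1 j2, ?e i2 j1#}"
    by (metis union_single_eq_member)
  then have "?e i1 j1 = ?e i1 j2 \<or> ?e i1 j1 = ?e i2 j1"
    by simp
  then show False using assms by (auto simp: min_def max_def split: if_splits)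
qed

lemma sym_trop_singular_2x2_if_additive:
  assumes "card I = 2" "card J = 2" and additive: "\<And>x y. x \<in> I \<Longrightarrow> y \<in> J \<Longrightarrow> A x y = a x + b y"
  shows "sym_trop_singular A I J"
proof -
  obtain i1 i2 where I: "I = {i1, i2}" "i1 \<noteq> i2" using assms(1) by (metis card_2_iff)
  obtain j1 j2 where J: "J = {j1, j2}" "j1 \<noteq> j2" using assms(2) by (metis card_2_iff)
  have trop_val_const: "trop_val A I \<rho> = sum a I + sum b J" if \<rho>: "bij_betw \<rho> I J" for \<rho>
  proof -
    have "trop_val A I \<rho> = (\<Sum>x\<in>I. a x + b (\<rho> x))"
      unfolding trop_val_def using additive bij_betwE[OF \<rho>] by (intro sum.cong) auto
    also have "\<dots> = sum a I + sum b J"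
      by (simp add: sum.distrib sum.reindex_bij_betw[OF \<rho>])
    finally show ?thesis .
  qed
  define \<rho>1 where "\<rho>1 x = (if x = i1 then j1 else j2)" for x
  define \<rho>2 where "\<rho>2 x = (if x = i1 then j2 else j1)" for x
  have bij: "bij_betw \<rho>1 I J" "bij_betw \<rho>2 I J"
    unfolding \<rho>1_def \<rho>2_def bij_betw_def inj_on_def using I J by auto
  have "sym_monomial I \<rho>1 \<noteq> sym_monomial I \<rho>2"
    unfolding I(1) \<rho>1_def \<rho>2_def using I(2) J(2) by (rule sym_monomial_swap_neq)
  moreover have "\<forall>\<rho>. bij_betw \<rho> I J \<longrightarrow>
      trop_val A I \<rho>1 \<le> trop_val A I \<rho> \<and> trop_val A I \<rho>2 \<le> trop_val A I \<rho>"
    using trop_val_const bij by simp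
  ultimately show ?thesis
    unfolding sym_trop_singular_def using bij by blast
qed

lemma sym_lift_rank_ge_2:
  assumes "I \<subseteq> {..<n}" "J \<subseteq> {..<n}" "card I = 2" "card J = 2"
    and "\<not> sym_trop_singular A I J" and "sym_lift A n M" and "hrank_le M n r"
  shows "2 \<le> r"
proof (rule ccontr)
  assume "\<not> 2 \<le> r"
  then have "r \<le> 1" by simp
  then obtain a b where "\<And>x y. x < n \<Longrightarrow> y < n \<Longrightarrow> A x y = a x + b y"
    using sym_lift_hrank_le_1_additive assms(6,7) by blast
  then have "sym_trop_singular A I J"
    using assms(1-4) by (intro sym_trop_singular_2x2_if_additive[where a = a and b = b]) auto
  then show False using assms(5) by contradiction
qed

lemma finite_sym_trop_rank_set:
  "finite {r. \<exists>I J. I \<subseteq> {..<n} \<and> J \<subseteq> {..<n} \<and> card I = r \<and> card J = r \<and> \<not> sym_trop_singular A I J}"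
proof (rule finite_subset)
  show "{r. \<exists>I J. I \<subseteq> {..<n} \<and> J \<subseteq> {..<n} \<and> card I = r \<and> card J = r \<and> \<not> sym_trop_singular A I J}
      \<subseteq> {..n}"
    using card_mono[OF finite_lessThan] by fastforce
qed simp

lemma sym_trop_rank_attained:
  obtains I J where "I \<subseteq> {..<n}" "J \<subseteq> {..<n}"
    "card I = sym_trop_rank A n" "card J = sym_trop_rank A n" "\<not> sym_trop_singular A I J"
proof -
  let ?R = "{r. \<exists>I J. I \<subseteq> {..<n} \<and> J \<subseteq> {..<n} \<and> card I = r \<and> card J = r \<and> \<not> sym_trop_singular A I J}"
  have "\<not> sym_trop_singular A {} {}"
    unfolding sym_trop_singular_def sym_monomial_def by simp
  then have "0 \<in> ?R" by fastforce
  then have "Max ?R \<in> ?R" using finite_sym_trop_rank_set by (intro Max_in) auto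
  then show ?thesis using that unfolding sym_trop_rank_def by blast
qed

lemma sym_trop_rank_ge:
  assumes "I \<subseteq> {..<n}" "J \<subseteq> {..<n}" "card I = r" "card J = r" "\<not> sym_trop_singular A I J"
  shows "r \<le> sym_trop_rank A n"
  unfolding sym_trop_rank_def using assms by (intro Max_ge finite_sym_trop_rank_set) blast

section \<open>Threshold graphs and a lift of rank two\<close>

definition above_graph :: "(nat \<Rightarrow> nat \<Rightarrow> real) \<Rightarrow> nat \<Rightarrow> real \<Rightarrow> nat \<Rightarrow> nat \<Rightarrow> bool" where
  "above_graph A n v x y \<longleftrightarrow> x < n \<and> y < n \<and> v < A x y"

lemma rtranclp_shortcut_le_2:
  assumes shortcut: "\<And>a z b c. r a z \<Longrightarrow> r z b \<Longrightarrow> r b c \<Longrightarrow> a \<noteq> c \<Longrightarrow> r a c"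
    and "r\<^sup>*\<^sup>* a b"
  shows "a = b \<or> r a b \<or> (\<exists>z. r a z \<and> r z b)"
  using assms(2)
proof (induction rule: rtranclp_induct)
  case (step b c)
  from step.IH show ?case
  proof (elim disjE exE conjE)
    fix z assume "r a z" "r z b"
    then show ?case using shortcut step.hyps(2) by blast
  qed (use step.hyps(2) in auto)
qed simp

lemma Least_rtranclp_eq_iff:
  fixes r :: "nat \<Rightarrow> nat \<Rightarrow> bool"
  assumes "symp r"
  shows "(LEAST z. r\<^sup>*\<^sup>* x z) = (LEAST z. r\<^sup>*\<^sup>* y z) \<longleftrightarrow> r\<^sup>*\<^sup>* x y"
proof
  have sym: "r\<^sup>*\<^sup>* a b \<Longrightarrow> r\<^sup>*\<^sup>* b a" for a b
    using symp_rtranclp[OF assms] by (rule sympD)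
  have x: "r\<^sup>*\<^sup>* x (LEAST z. r\<^sup>*\<^sup>* x z)" and y: "r\<^sup>*\<^sup>* y (LEAST z. r\<^sup>*\<^sup>* y z)"
    by (auto intro: LeastI)
  show "r\<^sup>*\<^sup>* x y" if "(LEAST z. r\<^sup>*\<^sup>* x z) = (LEAST z. r\<^sup>*\<^sup>* y z)"
    using x sym[OF y] that by simp
  show "(LEAST z. r\<^sup>*\<^sup>* x z) = (LEAST z. r\<^sup>*\<^sup>* y z)" if "r\<^sup>*\<^sup>* x y"
  proof -
    have "r\<^sup>*\<^sup>* x = r\<^sup>*\<^sup>* y"
      using that sym by (blast intro: rtranclp_trans)
    then show ?thesis by simp
  qed
qed

definition entry_values :: "(nat \<Rightarrow> nat \<Rightarrow> real) \<Rightarrow> nat \<Rightarrow> real set" where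
  "entry_values A n = {A x y |x y. x < n \<and> y < n}"

(* The component is labelled by its least index, shifted by one so that labels, and sums of two
   labels, never vanish. *)
definition component_series :: "(nat \<Rightarrow> nat \<Rightarrow> real) \<Rightarrow> nat \<Rightarrow> nat \<Rightarrow> real \<Rightarrow> complex" where
  "component_series A n x c =
    (if c \<in> entry_values A n then of_nat (Suc (LEAST z. (above_graph A n c)\<^sup>*\<^sup>* x z)) else 0)"

lemma finite_entry_values: "finite (entry_values A n)"
  unfolding entry_values_def by (intro finite_image_set2) auto

lemma component_series_eq_0_iff: "component_series A n x c = 0 \<longleftrightarrow> c \<notin> entry_values A n"
  unfolding component_series_def by (simp del: of_nat_Suc)

lemma component_series_add_neq_0:
  "c \<in> entry_values A n \<Longrightarrow> component_series A n x c + component_series A n y c \<noteq> 0"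
  unfolding component_series_def by (simp del: of_nat_Suc flip: of_nat_add)

lemma component_series_eq_iff:
  assumes "\<And>x y. x < n \<Longrightarrow> y < n \<Longrightarrow> A x y = A y x"
  shows "component_series A n x c = component_series A n y c \<longleftrightarrow>
    c \<notin> entry_values A n \<or> (above_graph A n c)\<^sup>*\<^sup>* x y"
proof -
  have "symp (above_graph A n c)"
    using assms unfolding above_graph_def by (auto intro: sympI)
  then show ?thesis
    unfolding component_series_def by (simp add: Least_rtranclp_eq_iff)
qed

lemma bipartite_sym_lift_hrank_le_2:
  fixes A :: "nat \<Rightarrow> nat \<Rightarrow> real" and S :: "nat set"
  assumes sym: "\<And>x y. x < n \<Longrightarrow> y < n \<Longrightarrow> A x y = A y x"
    and nonneg: "\<And>x y. x < n \<Longrightarrow> y < n \<Longrightarrow> 0 \<le> A x y"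
    and same_side: "\<And>x y. x < n \<Longrightarrow> y < n \<Longrightarrow> x \<in> S \<longleftrightarrow> y \<in> S \<Longrightarrow> A x y = 0"
    and cross: "\<And>x y. x < n \<Longrightarrow> y < n \<Longrightarrow> x \<in> S \<Longrightarrow> y \<notin> S \<Longrightarrow>
      \<not> (above_graph A n (A x y))\<^sup>*\<^sup>* x y"
  shows "\<exists>M. sym_lift A n M \<and> hrank_le M n 2"
proof -
  note component_eq_iff = component_series_eq_iff[of n A, OF sym]
  define g where "g x c = (if x \<in> S then 1 else -1) * component_series A n x c" for x c
  define M where "M = (\<lambda>x y c. g x c + g y c)"
  have "g x c = 0" if "c \<notin> entry_values A n" for x c
    using that by (simp add: g_def component_series_eq_0_iff)
  then have "{c. g x c \<noteq> 0} \<subseteq> entry_values A n" "{c. M x y c \<noteq> 0} \<subseteq> entry_values A n" for x y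
    unfolding M_def by (auto intro: ccontr)
  then have hahn: "is_hahn (g x)" "is_hahn (M x y)" for x y
    by (metis finite_subset finite_entry_values is_hahn_if_finite_support)+
  have entry: "A x y \<in> entry_values A n" if "x < n" "y < n" for x y
    using that unfolding entry_values_def by blast
  have degree: "M x y (A x y) \<noteq> 0 \<and> (\<forall>c < A x y. M x y c = 0)" if xy: "x < n" "y < n" for x y
  proof (cases "x \<in> S \<longleftrightarrow> y \<in> S")
    case True
    then have M_sum: "M x y c = (if x \<in> S then 1 else -1) *
        (component_series A n x c + component_series A n y c)" for c
      unfolding M_def g_def by (auto simp: algebra_simps)
    have "component_series A n z c = 0" if "c < 0" for z c
      using nonneg that unfolding component_series_eq_0_iff entry_values_def by force
    then show ?thesis
      using M_sum same_side[OF xy True] entry[OF xy] component_series_add_neq_0 by simp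
  next
    case False
    then have M_diff: "M x y c = 0 \<longleftrightarrow> component_series A n x c = component_series A n y c" for c
      unfolding M_def g_def by (auto simp: algebra_simps)
    have "component_series A n x (A x y) \<noteq> component_series A n y (A x y)"
    proof (cases "x \<in> S")
      case True
      then show ?thesis
        using False cross[OF xy] entry[OF xy] component_eq_iff by auto
    next
      case False
      then have "component_series A n y (A x y) \<noteq> component_series A n x (A x y)"
        using \<open>\<not> (x \<in> S \<longleftrightarrow> y \<in> S)\<close> cross[OF xy(2,1)] entry[OF xy] sym[OF xy]
          component_eq_iff by auto
      then show ?thesis by (rule not_sym)
    qed
    moreover have "component_series A n x c = component_series A n y c" if "c < A x y" for c
    proof -
      have "(above_graph A n c)\<^sup>*\<^sup>* x y"
        using xy that unfolding above_graph_def by auto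
      then show ?thesis using component_eq_iff by blast
    qed
    ultimately show ?thesis using M_diff by blast
  qed
  have "sym_lift A n M"
    unfolding sym_lift_def
  proof (intro allI impI conjI)
    fix x y assume xy: "x < n" "y < n"
    show "is_hahn (M x y)" by (rule hahn)
    show "M x y \<noteq> hzero" using degree[OF xy] by (auto simp: hzero_def)
    show "hdeg (M x y) = A x y" using degree[OF xy] by (intro hdeg_eqI) auto
    show "M x y = M y x" unfolding M_def by (simp add: add.commute)
  qed
  moreover have "hrank_le M n 2"
    unfolding M_def using hahn(1) by (rule hrank_le_2_sum)
  ultimately show ?thesis by blast
qed

section \<open>The block matrix\<close>

lemma block_matrix_sym: "block_matrix k C x y = block_matrix k C y x"
  unfolding block_matrix_def by auto

lemma block_matrix_same_side: "x \<le> k \<longleftrightarrow> y \<le> k \<Longrightarrow> block_matrix k C x y = 0"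
  unfolding block_matrix_def by auto

lemma block_matrix_row_k [simp]: "block_matrix k C k y = 0"
  unfolding block_matrix_def by auto

lemma block_matrix_upper_right: "i < k \<Longrightarrow> k < j \<Longrightarrow> block_matrix k C i j = C i (j - Suc k)"
  unfolding block_matrix_def by auto

lemma block_matrix_nonneg:
  assumes "\<forall>i<k. \<forall>j<l. 0 \<le> C i j" "x < k + 1 + l" "y < k + 1 + l"
  shows "0 \<le> block_matrix k C x y"
  using assms unfolding block_matrix_def by auto

lemma block_matrix_gt_nonneg_sides:
  assumes "0 \<le> v" "v < block_matrix k C x y"
  shows "x < k \<and> k < y \<or> k < x \<and> y < k"
  using assms unfolding block_matrix_def by (auto split: if_splits)

definition no_strict_min_2x2 :: "nat \<Rightarrow> nat \<Rightarrow> (nat \<Rightarrow> nat \<Rightarrow> real) \<Rightarrow> bool" where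
  "no_strict_min_2x2 k l C \<longleftrightarrow> (\<forall>i<k. \<forall>i'<k. \<forall>m<l. \<forall>m'<l. i \<noteq> i' \<longrightarrow> m \<noteq> m' \<longrightarrow>
      \<not> (C i m < C i m' \<and> C i m < C i' m \<and> C i m < C i' m'))"

lemma no_strict_min_2x2_shortcut:
  assumes "no_strict_min_2x2 k l C" "i < k" "i' < k" "m < l" "m' < l"
    and "v < C i m'" "v < C i' m'" "v < C i' m"
  shows "v < C i m"
proof (cases "i = i' \<or> m = m'")
  case False
  then show ?thesis using assms unfolding no_strict_min_2x2_def by force
qed (use assms in auto)

lemma block_matrix_3x3_nonsingular:
  assumes nonneg: "\<forall>i<k. \<forall>j<l. 0 \<le> C i j"
    and ii': "i < k" "i' < k" "i \<noteq> i'" and mm': "m < l" "m' < l" "m \<noteq> m'"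
    and strict_min: "C i m < C i m'" "C i m < C i' m" "C i m < C i' m'"
  shows "\<not> sym_trop_singular (block_matrix k C) {i, i', k} {k + 1 + m, k + 1 + m', k}"
proof
  let ?A = "block_matrix k C"
  define I where "I = {i, i', k}"
  define J where "J = {k + 1 + m, k + 1 + m', k}"
  have trop_val_I: "trop_val ?A I \<rho> = ?A i (\<rho> i) + ?A i' (\<rho> i')" for \<rho>
    unfolding trop_val_def I_def using ii' by simp
  have entries: "?A i (k + 1 + m) = C i m" "?A i (k + 1 + m') = C i m'" "?A i k = 0"
    "?A i' (k + 1 + m) = C i' m" "?A i' (k + 1 + m') = C i' m'" "?A i' k = 0"
    using ii' by (simp_all add: block_matrix_upper_right block_matrix_same_side)
  have "0 \<le> C i m" "0 \<le> C i' m"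
    using nonneg ii' mm' by auto
  define \<rho>0 where "\<rho>0 x = (if x = i then k + 1 + m else if x = i' then k else k + 1 + m')" for x
  have "bij_betw \<rho>0 I J"
    unfolding \<rho>0_def I_def J_def bij_betw_def inj_on_def using ii' mm' by auto
  have "trop_val ?A I \<rho>0 = C i m"
    unfolding trop_val_I \<rho>0_def using ii' entries by simp
  have unique_min: "\<rho> x = \<rho>0 x" if "bij_betw \<rho> I J" "trop_val ?A I \<rho> \<le> C i m" "x \<in> I" for \<rho> x
  proof -
    have J: "\<rho> i \<in> J" "\<rho> i' \<in> J" "\<rho> k \<in> J"
      using bij_betwE[OF that(1)] unfolding I_def by auto
    have distinct: "\<rho> i \<noteq> \<rho> i'" "\<rho> i \<noteq> \<rho> k" "\<rho> i' \<noteq> \<rho> k"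
      using bij_betw_imp_inj_on[OF that(1)] ii' unfolding I_def inj_on_def by auto
    have "?A i (\<rho> i) + ?A i' (\<rho> i') \<le> C i m"
      using that(2) unfolding trop_val_I .
    then have "\<rho> i = k + 1 + m \<and> \<rho> i' = k"
      using J(1,2) distinct(1) entries strict_min \<open>0 \<le> C i m\<close> \<open>0 \<le> C i' m\<close>
      unfolding J_def by auto
    moreover have "k + 1 + m \<noteq> k + 1 + m'" using mm' by simp
    ultimately show ?thesis
      using J(3) distinct that(3) unfolding I_def J_def \<rho>0_def by auto
  qed
  assume "sym_trop_singular ?A {i, i', k} {k + 1 + m, k + 1 + m', k}"
  then obtain \<rho>1 \<rho>2 where "bij_betw \<rho>1 I J" "bij_betw \<rho>2 I J"
    "sym_monomial I \<rho>1 \<noteq> sym_monomial I \<rho>2"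
    "trop_val ?A I \<rho>1 \<le> trop_val ?A I \<rho>0" "trop_val ?A I \<rho>2 \<le> trop_val ?A I \<rho>0"
    unfolding sym_trop_singular_def I_def J_def using \<open>bij_betw \<rho>0 I J\<close>[unfolded I_def J_def]
    by blast
  moreover have "sym_monomial I \<rho> = sym_monomial I \<rho>0"
    if "bij_betw \<rho> I J" "trop_val ?A I \<rho> \<le> C i m" for \<rho>
    unfolding sym_monomial_def using unique_min[OF that] by (intro image_mset_cong) (simp add: I_def)
  ultimately show False using \<open>trop_val ?A I \<rho>0 = C i m\<close> by metis
qed

lemma no_strict_min_2x2_if_sym_trop_rank_le_2:
  assumes nonneg: "\<forall>i<k. \<forall>j<l. 0 \<le> C i j"
    and rank: "sym_trop_rank (block_matrix k C) (k + 1 + l) \<le> 2"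
  shows "no_strict_min_2x2 k l C"
  unfolding no_strict_min_2x2_def
proof (intro allI impI notI)
  fix i i' m m'
  assume "i < k" "i' < k" "m < l" "m' < l" "i \<noteq> i'" "m \<noteq> m'"
    and "C i m < C i m' \<and> C i m < C i' m \<and> C i m < C i' m'"
  then have "\<not> sym_trop_singular (block_matrix k C) {i, i', k} {k + 1 + m, k + 1 + m', k}"
    using nonneg by (intro block_matrix_3x3_nonsingular) auto
  moreover have "card {i, i', k} = 3" "card {k + 1 + m, k + 1 + m', k} = 3"
    using \<open>i < k\<close> \<open>i' < k\<close> \<open>i \<noteq> i'\<close> \<open>m \<noteq> m'\<close> by auto
  moreover have "{i, i', k} \<subseteq> {..<k + 1 + l}" "{k + 1 + m, k + 1 + m', k} \<subseteq> {..<k + 1 + l}"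
    using \<open>i < k\<close> \<open>i' < k\<close> \<open>m < l\<close> \<open>m' < l\<close> by auto
  ultimately have "3 \<le> sym_trop_rank (block_matrix k C) (k + 1 + l)"
    by (intro sym_trop_rank_ge) auto
  then show False using rank by simp
qed

lemma block_matrix_above_graph_shortcut:
  assumes "no_strict_min_2x2 k l C" and "0 \<le> v"
    and edges: "above_graph (block_matrix k C) (k + 1 + l) v a z"
      "above_graph (block_matrix k C) (k + 1 + l) v z b"
      "above_graph (block_matrix k C) (k + 1 + l) v b c"
  shows "above_graph (block_matrix k C) (k + 1 + l) v a c"
proof -
  let ?A = "block_matrix k C"
  have row_case: "v < ?A i j"
    if "i < k" "i' < k" "k < j" "k < j'" "j < k + 1 + l" "j' < k + 1 + l"
      "v < ?A i j'" "v < ?A i' j'" "v < ?A i' j" for i i' j j'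
    using that no_strict_min_2x2_shortcut[OF assms(1), of i i' "j - Suc k" "j' - Suc k"]
    by (simp add: block_matrix_upper_right)
  have sides: "x < k \<and> k < y \<or> k < x \<and> y < k" if "v < ?A x y" for x y
    using block_matrix_gt_nonneg_sides[OF \<open>0 \<le> v\<close> that] .
  have bounds: "a < k + 1 + l" "z < k + 1 + l" "b < k + 1 + l" "c < k + 1 + l"
    and gt: "v < ?A a z" "v < ?A z b" "v < ?A b c"
    using edges unfolding above_graph_def by auto
  have "v < ?A a c"
  proof (cases "a < k")
    case True
    then have "k < z" "b < k" "k < c" using sides[OF gt(1)] sides[OF gt(2)] sides[OF gt(3)] by auto
    then show ?thesis
      using row_case[of a b c z] True bounds gt block_matrix_sym[of k C z b] by simp
  next
    case False
    then have "z < k" "k < b" "c < k" using sides[OF gt(1)] sides[OF gt(2)] sides[OF gt(3)] by auto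
    then have "v < ?A c a"
      using row_case[of c z a b] False bounds gt sides[OF gt(1)]
        block_matrix_sym[of k C a z] block_matrix_sym[of k C b c] by simp
    then show ?thesis using block_matrix_sym[of k C a c] by simp
  qed
  then show ?thesis using bounds unfolding above_graph_def by simp
qed

lemma block_matrix_cross_disconnected:
  assumes "no_strict_min_2x2 k l C" and "\<forall>i<k. \<forall>j<l. 0 \<le> C i j"
    and "x \<le> k" "k < y" "y < k + 1 + l"
  shows "\<not> (above_graph (block_matrix k C) (k + 1 + l) (block_matrix k C x y))\<^sup>*\<^sup>* x y"
proof
  let ?A = "block_matrix k C" and ?v = "block_matrix k C x y"
  have "0 \<le> ?v" using assms(2-5) by (intro block_matrix_nonneg) auto
  note sides = block_matrix_gt_nonneg_sides[OF this]
  assume "(above_graph ?A (k + 1 + l) ?v)\<^sup>*\<^sup>* x y"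
  then have "x = y \<or> above_graph ?A (k + 1 + l) ?v x y \<or>
      (\<exists>z. above_graph ?A (k + 1 + l) ?v x z \<and> above_graph ?A (k + 1 + l) ?v z y)"
    using block_matrix_above_graph_shortcut[OF assms(1) \<open>0 \<le> ?v\<close>]
    by (intro rtranclp_shortcut_le_2)
  then obtain z where "?v < ?A x z" "?v < ?A z y"
    using \<open>x \<le> k\<close> \<open>k < y\<close> unfolding above_graph_def by auto
  then have "k < z" using sides \<open>x \<le> k\<close> by fastforce
  then show False using sides[OF \<open>?v < ?A z y\<close>] \<open>k < y\<close> by simp
qed

theorem lemma1:
  fixes k l :: nat and C :: "nat \<Rightarrow> nat \<Rightarrow> real"
  assumes "\<forall>i<k. \<forall>j<l. C i j \<ge> 0"
    and "\<forall>j<l. \<exists>i<k. C i j \<noteq> 0"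
    and "sym_trop_rank (block_matrix k C) (k + 1 + l) = 2"
  shows "sym_kapranov_rank (block_matrix k C) (k + 1 + l) = 2"
proof -
  let ?A = "block_matrix k C" and ?n = "k + 1 + l"
  obtain I J where "I \<subseteq> {..<?n}" "J \<subseteq> {..<?n}" "card I = 2" "card J = 2"
    "\<not> sym_trop_singular ?A I J"
    using sym_trop_rank_attained[of ?n ?A] assms(3) by metis
  then have lower: "2 \<le> r" if "sym_lift ?A ?n M" "hrank_le M ?n r" for M r
    using sym_lift_rank_ge_2 that by blast
  have "no_strict_min_2x2 k l C"
    using assms(1,3) by (intro no_strict_min_2x2_if_sym_trop_rank_le_2) auto
  then have "\<exists>M. sym_lift ?A ?n M \<and> hrank_le M ?n 2"
    using assms(1) block_matrix_cross_disconnected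
    by (intro bipartite_sym_lift_hrank_le_2[where S = "{..k}"])
      (simp_all add: block_matrix_sym block_matrix_same_side block_matrix_nonneg not_le)
  then show ?thesis
    unfolding sym_kapranov_rank_def using lower by (intro Least_equality) auto
qed

end
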